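(* Let $P$ be a set of $n$ points in general position in the plane such that the number $m$ of points of $P$ on the boundary of the convex hull of $P$ satisfies $m\in\{8,9\}$. Then $\mu(D(P))\geq\binom{n}{2}-8$.
   Context: General position means no three points collinear. $D(P)$ is the graph whose vertices are all closed segments with both endpoints in $P$, two adjacent iff disjoint. For a graph $G$ and $U\subseteq V(G)$, two distinct vertices $x,y\in U$ are $U$-mutually visible if $G$ contains a shortest $x$-$y$ path none of whose internal vertices lies in $U$; $U$ is a mutual-visibility set if every two distinct vertices of $U$ are $U$-mutually visible. $\mu(G)$ is the maximum size of a mutual-visibility set of $G$. *)

theory Defs
  imports "HOL-Analysis.Analysis"
begin

definition is_walk :: "'v set \<Rightarrow> ('v \<Rightarrow> 'v \<Rightarrow> bool) \<Rightarrow> 'v list \<Rightarrow> bool" where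
  "is_walk V E xs \<longleftrightarrow> xs \<noteq> [] \<and> set xs \<subseteq> V \<and>
     (\<forall>i. Suc i < length xs \<longrightarrow> E (xs ! i) (xs ! Suc i))"

definition walk_between :: "'v set \<Rightarrow> ('v \<Rightarrow> 'v \<Rightarrow> bool) \<Rightarrow> 'v \<Rightarrow> 'v \<Rightarrow> 'v list \<Rightarrow> bool" where
  "walk_between V E x y xs \<longleftrightarrow> is_walk V E xs \<and> hd xs = x \<and> last xs = y"

text \<open>A shortest x-y path: an x-y walk of minimum length (such a walk is a path).\<close>
definition shortest_path :: "'v set \<Rightarrow> ('v \<Rightarrow> 'v \<Rightarrow> bool) \<Rightarrow> 'v \<Rightarrow> 'v \<Rightarrow> 'v list \<Rightarrow> bool" where
  "shortest_path V E x y xs \<longleftrightarrow> walk_between V E x y xs \<and>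
     (\<forall>ys. walk_between V E x y ys \<longrightarrow> length xs \<le> length ys)"

definition mutually_visible :: "'v set \<Rightarrow> ('v \<Rightarrow> 'v \<Rightarrow> bool) \<Rightarrow> 'v set \<Rightarrow> 'v \<Rightarrow> 'v \<Rightarrow> bool" where
  "mutually_visible V E U x y \<longleftrightarrow>
     (\<exists>xs. shortest_path V E x y xs \<and> (\<forall>z \<in> set (butlast (tl xs)). z \<notin> U))"

definition mutual_visibility_set :: "'v set \<Rightarrow> ('v \<Rightarrow> 'v \<Rightarrow> bool) \<Rightarrow> 'v set \<Rightarrow> bool" where
  "mutual_visibility_set V E U \<longleftrightarrow> U \<subseteq> V \<and>
     (\<forall>x\<in>U. \<forall>y\<in>U. x \<noteq> y \<longrightarrow> mutually_visible V E U x y)"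

definition mu :: "'v set \<Rightarrow> ('v \<Rightarrow> 'v \<Rightarrow> bool) \<Rightarrow> nat" where
  "mu V E = Max {card U | U. mutual_visibility_set V E U}"

definition seg_vertices :: "(real^2) set \<Rightarrow> (real^2) set set" where
  "seg_vertices P = {closed_segment a b | a b. a \<in> P \<and> b \<in> P \<and> a \<noteq> b}"

definition seg_adj :: "(real^2) set \<Rightarrow> (real^2) set \<Rightarrow> bool" where
  "seg_adj S T \<longleftrightarrow> S \<inter> T = {}"

definition general_position :: "(real^2) set \<Rightarrow> bool" where
  "general_position P \<longleftrightarrow>
     (\<forall>a\<in>P. \<forall>b\<in>P. \<forall>c\<in>P. a \<noteq> b \<and> a \<noteq> c \<and> b \<noteq> c \<longrightarrow> \<not> collinear {a, b, c})"

end

theory Submission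
  imports Defs
begin

text \<open>Following supporting edges from a point on the frontier of the hull runs once around the
  hull and visits every hull point; as there are at least eight of them, this yields hull vertices
  a0, ..., a7 in convex position such that each a(2t) a(2t+1) is a hull edge. Let W consist of
  these four edges and the four segments joining {a0, a1} to {a4, a5}. Every segment avoiding W
  is kept. Disjoint kept segments are adjacent. If two kept segments x, y meet, some segment of
  W is disjoint from both and is a common neighbour outside the kept set: otherwise each of the
  four hull edges in W shares an endpoint with x or y, so the four endpoints of x and y lie one
  in each block {a(2t), a(2t+1)}; if x and y cross, one of them joins block 0 to block 2 and lies
  in W, and if they do not cross they are disjoint by convexity. Hence all but at most eight
  segments form a mutual-visibility set.\<close>

section \<open>Orientation of point triples\<close>

lemma inner_vec2: "(x::real^2) \<bullet> y = x$1 * y$1 + x$2 * y$2"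
  by (simp add: inner_vec_def UNIV_2)

lemma vec2_eq_iff: "(x::real^2) = y \<longleftrightarrow> x$1 = y$1 \<and> x$2 = y$2"
  by (simp add: vec_eq_iff forall_2)

text \<open>Twice the signed area of the triangle abc: positive iff c lies strictly to the left
  of the directed line from a to b.\<close>
definition orient :: "real^2 \<Rightarrow> real^2 \<Rightarrow> real^2 \<Rightarrow> real" where
  "orient a b c = (b$1 - a$1) * (c$2 - a$2) - (b$2 - a$2) * (c$1 - a$1)"

lemma orient_rotate: "orient a b c = orient b c a"
  by (simp add: orient_def algebra_simps)

lemma orient_swap_23: "orient a c b = - orient a b c"
  by (simp add: orient_def algebra_simps)

lemma orient_swap_12: "orient b a c = - orient a b c"
  by (simp add: orient_def algebra_simps)

lemma orient_degenerate [simp]: "orient a b b = 0" "orient a a b = 0" "orient a b a = 0"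
  by (simp_all add: orient_def)

definition perp :: "real^2 \<Rightarrow> real^2" where
  "perp v = vector [- (v$2), v$1]"

lemma orient_eq_inner_perp: "orient a b x = perp (b - a) \<bullet> (x - a)"
  by (simp add: orient_def perp_def inner_vec2 algebra_simps)

lemma perp_eq_0_iff [simp]: "perp v = 0 \<longleftrightarrow> v = 0"
  by (auto simp: perp_def vec2_eq_iff)

lemma collinear_if_orient_eq_0:
  assumes "orient a b c = 0"
  shows "collinear {a, b, c}"
proof (cases "a = b")
  case True
  then show ?thesis by (simp add: collinear_2)
next
  case False
  define t where "t = (if b$1 \<noteq> a$1 then (c$1 - a$1) / (b$1 - a$1) else (c$2 - a$2) / (b$2 - a$2))"
  have cross: "(b$1 - a$1) * (c$2 - a$2) = (b$2 - a$2) * (c$1 - a$1)"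
    using assms by (simp add: orient_def)
  have "c - a = t *\<^sub>R (b - a)"
  proof (cases "b$1 = a$1")
    case True
    then have "b$2 \<noteq> a$2" "c$1 = a$1"
      using False cross by (auto simp: vec2_eq_iff)
    then show ?thesis using True by (simp add: t_def vec2_eq_iff)
  next
    case False
    then have "t = (c$1 - a$1) / (b$1 - a$1)" "b$1 - a$1 \<noteq> 0"
      by (simp_all add: t_def)
    then have t1: "c$1 - a$1 = t * (b$1 - a$1)"
      by simp
    then have "(b$1 - a$1) * (c$2 - a$2) = (b$1 - a$1) * (t * (b$2 - a$2))"
      using cross by (simp add: ac_simps)
    then have "c$2 - a$2 = t * (b$2 - a$2)"
      using \<open>b$1 - a$1 \<noteq> 0\<close> by simp
    with t1 show ?thesis by (simp add: vec2_eq_iff)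
  qed
  then have "collinear {0, b - a, c - a}"
    by (subst collinear_lemma) blast
  moreover have "{a, b, c} = {b, a, c}" by auto
  ultimately show ?thesis by (simp add: collinear_3)
qed

lemma general_position_orient_nonzero:
  assumes "general_position P" "a \<in> P" "b \<in> P" "c \<in> P" "a \<noteq> b" "a \<noteq> c" "b \<noteq> c"
  shows "orient a b c \<noteq> 0"
  using assms collinear_if_orient_eq_0 unfolding general_position_def by blast

lemma orient_eq_0_if_orthogonal:
  assumes "n \<noteq> 0" "n \<bullet> (b - a) = 0" "n \<bullet> (c - a) = 0"
  shows "orient a b c = 0"
proof -
  have "n$1 * orient a b c = (n \<bullet> (b - a)) * (c$2 - a$2) - (n \<bullet> (c - a)) * (b$2 - a$2)"
    "n$2 * orient a b c = (n \<bullet> (c - a)) * (b$1 - a$1) - (n \<bullet> (b - a)) * (c$1 - a$1)"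
    by (simp_all add: orient_def inner_vec2 algebra_simps)
  moreover have "n$1 \<noteq> 0 \<or> n$2 \<noteq> 0"
    using assms(1) by (auto simp: vec2_eq_iff)
  ultimately show ?thesis
    using assms(2,3) by auto
qed

lemma orient_closed_segment:
  assumes "z \<in> closed_segment c d"
  obtains u where "0 \<le> u" "u \<le> 1" "orient a b z = (1 - u) * orient a b c + u * orient a b d"
proof -
  obtain u where "0 \<le> u" "u \<le> 1" and z: "z = (1 - u) *\<^sub>R c + u *\<^sub>R d"
    using assms unfolding closed_segment_def by blast
  then show ?thesis
    by (intro that[of u]) (simp_all add: z orient_def algebra_simps)
qed

lemma closed_segment_disjoint_if_left:
  assumes "orient a b c > 0" "orient a b d > 0"
  shows "closed_segment a b \<inter> closed_segment c d = {}"
proof (rule ccontr)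
  assume "closed_segment a b \<inter> closed_segment c d \<noteq> {}"
  then obtain z where z: "z \<in> closed_segment a b" "z \<in> closed_segment c d"
    by blast
  obtain u where "0 \<le> u" "u \<le> 1" and zd: "orient a b z = (1 - u) * orient a b c + u * orient a b d"
    using orient_closed_segment[OF z(2)] by blast
  then have "orient a b z > 0"
    using assms by (cases "u = 0") (auto intro: add_nonneg_pos add_pos_nonneg)
  moreover obtain v where "orient a b z = (1 - v) * orient a b a + v * orient a b b"
    using orient_closed_segment[OF z(1)] by blast
  ultimately show False by simp
qed

text \<open>The identity behind transitivity of the angular order around p on a half-plane
  {x. m \<bullet> (x - p) > 0}.\<close>
lemma orient_linear_identity:
  "orient p b d * (m \<bullet> (c - p)) = orient p b c * (m \<bullet> (d - p)) + orient p c d * (m \<bullet> (b - p))"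
  by (simp add: orient_def inner_vec2 algebra_simps)

lemma orient_pos_trans:
  assumes "m \<bullet> (c - p) > 0" "m \<bullet> (b - p) \<ge> 0" "m \<bullet> (d - p) > 0"
    and "orient p b c > 0" "orient p c d > 0"
  shows "orient p b d > 0"
proof -
  have "orient p b d * (m \<bullet> (c - p)) > 0"
    using orient_linear_identity[of p b d m c] assms
    by (smt (verit) mult_pos_pos mult_nonneg_nonneg)
  then show ?thesis
    using assms(1) by (simp add: zero_less_mult_iff)
qed

section \<open>Supporting edges of the convex hull\<close>

definition supported :: "(real^2) set \<Rightarrow> real^2 \<Rightarrow> bool" where
  "supported P a \<longleftrightarrow> a \<in> P \<and> (\<exists>n. n \<noteq> 0 \<and> (\<forall>p\<in>P. n \<bullet> p \<le> n \<bullet> a))"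

text \<open>ab is an edge of the convex hull of P, traversed counterclockwise.\<close>
definition supporting_edge :: "(real^2) set \<Rightarrow> real^2 \<Rightarrow> real^2 \<Rightarrow> bool" where
  "supporting_edge P a b \<longleftrightarrow> a \<in> P \<and> b \<in> P \<and> a \<noteq> b \<and> (\<forall>p\<in>P - {a, b}. orient a b p > 0)"

lemma supported_if_frontier_convex_hull:
  fixes P :: "(real^2) set"
  assumes "finite P" "a \<in> P" "a \<in> frontier (convex hull P)"
  shows "supported P a"
proof (cases "aff_dim (convex hull P) < DIM(real^2)")
  case True
  then obtain n b where "n \<noteq> 0" and hyp: "convex hull P \<subseteq> {x. n \<bullet> x = b}"
    by (rule aff_lowdim_subset_hyperplane)
  have "n \<bullet> p \<le> n \<bullet> a" if "p \<in> P" for p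
  proof -
    have "n \<bullet> p = b" "n \<bullet> a = b"
      using hyp assms(2) that hull_subset[of P convex] by auto
    then show ?thesis by simp
  qed
  then show ?thesis
    using \<open>n \<noteq> 0\<close> assms(2) unfolding supported_def by blast
next
  case False
  then have "aff_dim (convex hull P) = DIM(real^2)"
    using aff_dim_le_DIM[of "convex hull P"] by linarith
  then have "rel_interior (convex hull P) = interior (convex hull P)"
    using affine_hull_UNIV rel_interior_interior by blast
  then have "a \<in> closure (convex hull P)" "a \<notin> rel_interior (convex hull P)"
    using assms(3) unfolding frontier_def by auto
  then obtain n where "n \<noteq> 0" and n: "\<And>y. y \<in> closure (convex hull P) \<Longrightarrow> n \<bullet> a \<le> n \<bullet> y"
    by (rule supporting_hyperplane_relative_frontier[OF convex_convex_hull]) blast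
  have "(- n) \<bullet> p \<le> (- n) \<bullet> a" if "p \<in> P" for p
    using n[of p] that hull_subset[of P convex] closure_subset[of "convex hull P"] by auto
  moreover have "- n \<noteq> 0"
    using \<open>n \<noteq> 0\<close> by simp
  ultimately show ?thesis
    using assms(2) unfolding supported_def by blast
qed

lemma supporting_edge_orient_nonneg:
  "supporting_edge P a b \<Longrightarrow> p \<in> P \<Longrightarrow> orient a b p \<ge> 0"
  unfolding supporting_edge_def by (cases "p = a \<or> p = b") (auto intro: less_imp_le)

lemma supporting_edge_orient_pos:
  "supporting_edge P a b \<Longrightarrow> p \<in> P \<Longrightarrow> p \<noteq> a \<Longrightarrow> p \<noteq> b \<Longrightarrow> orient a b p > 0"
  unfolding supporting_edge_def by blast

lemma supporting_edge_disjoint_segment: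
  assumes "supporting_edge P a b" "p \<in> P - {a, b}" "q \<in> P - {a, b}"
  shows "closed_segment a b \<inter> closed_segment p q = {}"
  using assms by (intro closed_segment_disjoint_if_left) (auto intro: supporting_edge_orient_pos)

lemma supported_if_supporting_edge:
  assumes "supporting_edge P a b"
  shows "supported P b"
proof -
  have "(- perp (b - a)) \<bullet> p \<le> (- perp (b - a)) \<bullet> b" if "p \<in> P" for p
    using supporting_edge_orient_nonneg[OF assms that] orient_eq_inner_perp[of a b p]
      orient_eq_inner_perp[of a b b]
    by (simp add: inner_diff_right)
  moreover have "- perp (b - a) \<noteq> 0"
    using assms unfolding supporting_edge_def by auto
  ultimately show ?thesis
    using assms unfolding supported_def supporting_edge_def by blast
qed

lemma supporting_edge_unique_source:
  assumes "supporting_edge P a b" "supporting_edge P a' b"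
  shows "a = a'"
proof (rule ccontr)
  assume "a \<noteq> a'"
  then have "orient a b a' > 0" "orient a' b a > 0"
    using assms unfolding supporting_edge_def by auto
  then show False
    using orient_swap_12[of a' b a] orient_rotate[of a b a'] orient_rotate[of b a' a] by simp
qed

lemma finite_perturbation_pos:
  fixes f g :: "'a \<Rightarrow> real"
  assumes "finite S" "\<And>p. p \<in> S \<Longrightarrow> f p > 0"
  obtains e where "e > 0" "\<And>p. p \<in> S \<Longrightarrow> f p + e * g p > 0"
proof -
  have "\<forall>\<^sub>F e in at_right 0. f p + e * g p > 0" if "p \<in> S" for p
  proof (rule order_tendstoD(1))
    show "((\<lambda>e. f p + e * g p) \<longlongrightarrow> f p) (at_right 0)"
      by (auto intro!: tendsto_eq_intros)
  qed (use assms(2) that in blast)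
  then have "\<forall>\<^sub>F e in at_right 0. \<forall>p\<in>S. f p + e * g p > 0"
    using assms(1) by (intro eventually_ball_finite) auto
  then have "\<forall>\<^sub>F e in at_right 0. e > 0 \<and> (\<forall>p\<in>S. f p + e * g p > 0)"
    by (intro eventually_conj eventually_at_right_less)
  then show ?thesis
    using that eventually_happens'[OF trivial_limit_at_right_real] by blast
qed

text \<open>In general position at most one other point lies on a supporting line at a, so a small
  rotation of the normal separates a strictly from the rest of P.\<close>
lemma strict_supporting_normal:
  assumes "finite P" "general_position P" "supported P a"
  obtains m where "\<And>p. p \<in> P - {a} \<Longrightarrow> m \<bullet> (p - a) > 0"
proof -
  obtain n where n: "n \<noteq> 0" "\<And>p. p \<in> P \<Longrightarrow> n \<bullet> (p - a) \<le> 0" and aP: "a \<in> P"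
    using assms(3) unfolding supported_def by (auto simp: inner_diff_right)
  show ?thesis
  proof (cases "\<exists>q\<in>P - {a}. n \<bullet> (q - a) = 0")
    case False
    then show ?thesis
      using n(2) by (intro that[of "- n"]) force
  next
    case True
    then obtain q where q: "q \<in> P" "q \<noteq> a" "n \<bullet> (q - a) = 0"
      by blast
    have below: "- (n \<bullet> (p - a)) > 0" if "p \<in> P - {a, q}" for p
    proof -
      have "orient a q p \<noteq> 0"
        using general_position_orient_nonzero[OF assms(2) aP q(1)] q that by auto
      then have "n \<bullet> (p - a) \<noteq> 0"
        using orient_eq_0_if_orthogonal[OF n(1) q(3)] by blast
      then show ?thesis
        using n(2) that by force
    qed
    obtain e where e: "e > 0"
      "\<And>p. p \<in> P - {a, q} \<Longrightarrow> - (n \<bullet> (p - a)) + e * ((q - a) \<bullet> (p - a)) > 0"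
      by (rule finite_perturbation_pos[of "P - {a, q}" "\<lambda>p. - (n \<bullet> (p - a))" "\<lambda>p. (q - a) \<bullet> (p - a)"])
        (use assms(1) below in auto)
    show ?thesis
    proof (rule that[of "e *\<^sub>R (q - a) - n"])
      fix p assume p: "p \<in> P - {a}"
      have "(e *\<^sub>R (q - a) - n) \<bullet> (p - a) = - (n \<bullet> (p - a)) + e * ((q - a) \<bullet> (p - a))"
        by (simp add: inner_diff_left)
      moreover have "e * ((q - a) \<bullet> (q - a)) > 0"
        using e(1) q(2) by simp
      ultimately show "(e *\<^sub>R (q - a) - n) \<bullet> (p - a) > 0"
        using e(2) p q(3) by (cases "p = q") auto
    qed
  qed
qed

lemma wf_orient_order:
  assumes "finite S" "\<And>p. p \<in> S \<Longrightarrow> m \<bullet> (p - a) > 0"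
  shows "wf {(c, b). c \<in> S \<and> b \<in> S \<and> orient a c b > 0}" (is "wf ?R")
proof -
  have trans: "trans ?R"
  proof (rule transI)
    fix c b d assume "(c, b) \<in> ?R" "(b, d) \<in> ?R"
    then show "(c, d) \<in> ?R"
      using orient_pos_trans[of m b a c d] assms(2) by (auto intro: less_imp_le)
  qed
  have "acyclic ?R"
    unfolding acyclic_def trancl_id[OF trans] by auto
  moreover have "finite ?R"
    by (rule finite_subset[of _ "S \<times> S"]) (use assms(1) in auto)
  ultimately show ?thesis
    by (intro finite_acyclic_wf)
qed

text \<open>The successor of a is the first point of P - {a} in the angular order around a.\<close>
lemma supporting_edge_exists:
  assumes "finite P" "general_position P" "supported P a" "card P \<ge> 2"
  obtains b where "supporting_edge P a b"
proof -
  have aP: "a \<in> P"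
    using assms(3) unfolding supported_def by blast
  obtain m where "\<And>p. p \<in> P - {a} \<Longrightarrow> m \<bullet> (p - a) > 0"
    using strict_supporting_normal[OF assms(1-3)] by blast
  then have wf: "wf {(c, b). c \<in> P - {a} \<and> b \<in> P - {a} \<and> orient a c b > 0}"
    using assms(1) by (intro wf_orient_order) auto
  have "\<not> P \<subseteq> {a}"
    using assms(4) card_mono[of "{a}" P] by (auto simp del: One_nat_def)
  then obtain x where "x \<in> P - {a}"
    by blast
  then obtain b where b: "b \<in> P - {a}" "\<And>c. c \<in> P - {a} \<Longrightarrow> \<not> orient a c b > 0"
    by (rule wfE_min[OF wf]) blast
  have "orient a b p > 0" if "p \<in> P - {a, b}" for p
  proof -
    have "orient a p b \<noteq> 0"
      by (rule general_position_orient_nonzero[OF assms(2) aP]) (use b that in auto)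
    then show ?thesis
      using b(2)[of p] that orient_swap_23[of a b p] by auto
  qed
  then have "supporting_edge P a b"
    using b(1) aP unfolding supporting_edge_def by blast
  then show ?thesis
    by (rule that)
qed

section \<open>Walking around the hull\<close>

lemma funpow_range_subset_prefix:
  fixes f :: "'a \<Rightarrow> 'a"
  assumes "(f ^^ i) x = (f ^^ j) x" "i < j"
  shows "range (\<lambda>l. (f ^^ l) x) \<subseteq> (\<lambda>l. (f ^^ l) x) ` {..<j}"
proof -
  have "(f ^^ l) x \<in> (\<lambda>l. (f ^^ l) x) ` {..<j}" for l
  proof (induction l rule: less_induct)
    case (less l)
    show ?case
    proof (cases "l < j")
      case False
      then have "(f ^^ l) x = (f ^^ (l - j + j)) x"
        by simp
      also have "\<dots> = (f ^^ (l - j)) ((f ^^ j) x)"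
        by (simp only: funpow_add comp_apply)
      also have "\<dots> = (f ^^ (l - j + i)) x"
        using assms(1) by (simp add: funpow_add)
      finally show ?thesis
        using less.IH[of "l - j + i"] False assms(2) by simp
    qed simp
  qed
  then show ?thesis by blast
qed

lemma inj_on_funpow_if_card_orbit:
  fixes f :: "'a \<Rightarrow> 'a"
  assumes "m \<le> card (range (\<lambda>l. (f ^^ l) x))"
  shows "inj_on (\<lambda>l. (f ^^ l) x) {..<m}"
proof (rule inj_onI, rule ccontr)
  fix i j assume ij: "i \<in> {..<m}" "j \<in> {..<m}" "(f ^^ i) x = (f ^^ j) x" "i \<noteq> j"
  then have "range (\<lambda>l. (f ^^ l) x) \<subseteq> (\<lambda>l. (f ^^ l) x) ` {..<max i j}"
    using funpow_range_subset_prefix[where f = f and i = "min i j" and x = x and j = "max i j"]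
    by (cases "i < j") (auto simp: min_def max_def)
  then have "card (range (\<lambda>l. (f ^^ l) x)) \<le> card ((\<lambda>l. (f ^^ l) x) ` {..<max i j})"
    by (intro card_mono) auto
  also have "\<dots> \<le> max i j"
    using card_image_le[of "{..<max i j}"] by simp
  finally show False
    using ij assms by auto
qed

text \<open>Otherwise the linear identity for orient forces both neighbours of c onto the line through c
  orthogonal to n, and the hull would not turn at c.\<close>
lemma below_vertex_between_supporting_edges:
  assumes "supporting_edge P b c" "supporting_edge P c d" "h \<in> P - {b, c, d}"
    and "n \<noteq> 0" "n \<bullet> (b - c) \<le> 0" "n \<bullet> (d - c) \<le> 0"
  shows "n \<bullet> (h - c) < 0"
proof (rule ccontr)
  assume "\<not> n \<bullet> (h - c) < 0"
  have o1: "orient c d h > 0"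
    using assms(2,3) by (auto intro: supporting_edge_orient_pos)
  have "orient b c h > 0"
    using assms(1,3) by (auto intro: supporting_edge_orient_pos)
  then have o2: "orient c h b > 0"
    by (simp add: orient_rotate[of b c h])
  have "b \<noteq> d"
    using o1 \<open>orient b c h > 0\<close> orient_swap_12[of c d h] by auto
  then have o3: "orient c d b > 0"
    using assms(1,2) unfolding supporting_edge_def by auto
  have "orient c d b * (n \<bullet> (h - c)) \<ge> 0"
    "orient c d h * (n \<bullet> (b - c)) \<le> 0" "orient c h b * (n \<bullet> (d - c)) \<le> 0"
    using o1 o2 o3 assms(5,6) \<open>\<not> n \<bullet> (h - c) < 0\<close> by (simp_all add: mult_nonneg_nonpos)
  then have "orient c d h * (n \<bullet> (b - c)) = 0" "orient c h b * (n \<bullet> (d - c)) = 0"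
    using orient_linear_identity[of c d b n h] by linarith+
  then have "n \<bullet> (b - c) = 0" "n \<bullet> (d - c) = 0"
    using o1 o2 by simp_all
  then show False
    using orient_eq_0_if_orthogonal[OF assms(4)] o3 by simp
qed

text \<open>Compare a supported point h with a point of the cycle C that is extreme in the direction of
  the outer normal at h.\<close>
lemma supported_mem_supporting_cycle:
  assumes "finite C" "C \<noteq> {}" "f ` C = C" "\<And>c. c \<in> C \<Longrightarrow> supporting_edge P c (f c)"
    and "supported P h"
  shows "h \<in> C"
proof (rule ccontr)
  assume "h \<notin> C"
  obtain n where "n \<noteq> 0" and n: "\<And>p. p \<in> P \<Longrightarrow> n \<bullet> (p - h) \<le> 0" and "h \<in> P"
    using assms(5) unfolding supported_def by (auto simp: inner_diff_right)
  have "Max ((\<lambda>y. n \<bullet> y) ` C) \<in> (\<lambda>y. n \<bullet> y) ` C"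
    using assms(1,2) by simp
  then obtain c where c: "c \<in> C" "n \<bullet> c = Max ((\<lambda>y. n \<bullet> y) ` C)"
    by (metis imageE)
  have top: "n \<bullet> (y - c) \<le> 0" if "y \<in> C" for y
    using Max_ge[of "(\<lambda>y. n \<bullet> y) ` C" "n \<bullet> y"] assms(1) that c(2) by (simp add: inner_diff_right)
  have "f c \<in> C" "c \<in> f ` C"
    using assms(3) c(1) by (metis imageI, simp)
  then obtain c' where "c' \<in> C" "f c' = c"
    by (metis imageE)
  then have "n \<bullet> (h - c) < 0"
    using below_vertex_between_supporting_edges[OF assms(4) assms(4), of c' "h" n]
      \<open>h \<notin> C\<close> \<open>h \<in> P\<close> \<open>n \<noteq> 0\<close> c(1) \<open>f c \<in> C\<close> top by auto
  moreover have "c \<in> P"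
    using assms(4)[OF c(1)] unfolding supporting_edge_def by blast
  ultimately show False
    using n[of c] by (simp add: inner_diff_right)
qed

lemma supporting_successor_exists:
  assumes "finite P" "general_position P" "card P \<ge> 2"
  obtains f where "\<And>a. supported P a \<Longrightarrow> supporting_edge P a (f a)"
proof -
  have "supporting_edge P a (SOME b. supporting_edge P a b)" if a: "supported P a" for a
  proof -
    obtain b where "supporting_edge P a b"
      by (rule supporting_edge_exists[OF assms(1,2) a assms(3)])
    then show ?thesis
      by (rule someI)
  qed
  then show ?thesis
    by (rule that)
qed

text \<open>The successor map is injective on the finitely many supported points, so the orbit of a
  supported point is a cycle; that cycle then contains every supported point.\<close>
lemma supported_subset_supporting_orbit:
  assumes "finite P" "\<And>a. supported P a \<Longrightarrow> supporting_edge P a (f a)" "supported P x"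
  shows "{a. supported P a} \<subseteq> range (\<lambda>i. (f ^^ i) x)"
proof -
  define A where "A = {a. supported P a}"
  define C where "C = range (\<lambda>i. (f ^^ i) x)"
  have "finite A"
    by (rule finite_subset[OF _ assms(1)]) (auto simp: A_def supported_def)
  have fA: "f a \<in> A" if "a \<in> A" for a
    using supported_if_supporting_edge[OF assms(2)] that unfolding A_def by simp
  have "inj_on f A"
    using assms(2) supporting_edge_unique_source unfolding A_def by (metis inj_onI mem_Collect_eq)
  have "(f ^^ i) x \<in> A" for i
    by (induction i) (use assms(3) fA in \<open>auto simp: A_def\<close>)
  then have "C \<subseteq> A"
    unfolding C_def by blast
  then have "finite C"
    using \<open>finite A\<close> by (rule finite_subset)
  have "f ` C \<subseteq> C"
  proof (rule image_subsetI)
    fix y assume "y \<in> C"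
    then obtain i where "y = (f ^^ i) x"
      unfolding C_def by blast
    then have "f y = (f ^^ Suc i) x"
      by simp
    then show "f y \<in> C"
      unfolding C_def by (rule range_eqI)
  qed
  then have "f ` C = C"
    using \<open>finite C\<close> inj_on_subset[OF \<open>inj_on f A\<close> \<open>C \<subseteq> A\<close>] by (intro endo_inj_surj)
  have "h \<in> C" if "supported P h" for h
  proof (rule supported_mem_supporting_cycle[OF \<open>finite C\<close> _ \<open>f ` C = C\<close> _ that])
    show "C \<noteq> {}"
      unfolding C_def by simp
    show "supporting_edge P c (f c)" if "c \<in> C" for c
      using assms(2) that \<open>C \<subseteq> A\<close> unfolding A_def by blast
  qed
  then show ?thesis
    unfolding C_def by blast
qed

lemma supporting_chain_exists:
  fixes P :: "(real^2) set"
  defines "m \<equiv> card (P \<inter> frontier (convex hull P))"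
  assumes "finite P" "general_position P" "2 \<le> m"
  obtains a where "\<And>i. supporting_edge P (a i) (a (Suc i))" "inj_on a {..<m}"
proof -
  define H where "H = P \<inter> frontier (convex hull P)"
  have "H \<subseteq> P" "m = card H"
    unfolding H_def m_def by auto
  have "2 \<le> card P"
    using assms(4) card_mono[OF assms(2) \<open>H \<subseteq> P\<close>] \<open>m = card H\<close> by linarith
  obtain f where edge: "\<And>a. supported P a \<Longrightarrow> supporting_edge P a (f a)"
    using supporting_successor_exists[OF assms(2,3) \<open>2 \<le> card P\<close>] by blast
  have HA: "H \<subseteq> {a. supported P a}"
    using supported_if_frontier_convex_hull[OF assms(2)] unfolding H_def by blast
  obtain x where "x \<in> H"
    using assms(4) \<open>m = card H\<close> by fastforce
  define a where "a i = (f ^^ i) x" for i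
  have orbit: "{a. supported P a} \<subseteq> range a"
    unfolding a_def using supported_subset_supporting_orbit[OF assms(2) edge] HA \<open>x \<in> H\<close> by blast
  have "supported P (a i)" for i
    using HA \<open>x \<in> H\<close> unfolding a_def
    by (induction i) (auto dest: supported_if_supporting_edge[OF edge])
  then have "supporting_edge P (a i) (a (Suc i))" for i
    using edge unfolding a_def by simp
  moreover have "m \<le> card (range a)"
  proof -
    have "range a \<subseteq> P"
      using \<open>\<And>i. supported P (a i)\<close> unfolding supported_def by blast
    then show ?thesis
      using HA orbit \<open>m = card H\<close> finite_subset[OF _ assms(2)] by (metis card_mono order_trans)
  qed
  then have "inj_on a {..<m}"
    unfolding a_def by (rule inj_on_funpow_if_card_orbit)
  ultimately show ?thesis
    using that by blast
qed

section \<open>Segments spanned by a convex chain\<close>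

definition convex_chain :: "(nat \<Rightarrow> real^2) \<Rightarrow> nat \<Rightarrow> bool" where
  "convex_chain a N \<longleftrightarrow> (\<forall>i j k. i < j \<longrightarrow> j < k \<longrightarrow> k < N \<longrightarrow> orient (a i) (a j) (a k) > 0)"

text \<open>Induction on k: the whole chain lies in the half-plane to the left of the hull edge
  a(i) a(i+1), on which the angular order around a(i) is transitive.\<close>
lemma supporting_chain_convex:
  assumes "inj_on a {..<N}" "\<And>i. Suc i < N \<Longrightarrow> supporting_edge P (a i) (a (Suc i))"
  shows "convex_chain a N"
  unfolding convex_chain_def
proof (intro allI impI)
  fix i j k assume ij: "i < j" and jk: "j < k" "k < N"
  from jk show "orient (a i) (a j) (a k) > 0"
  proof (induction k)
    case 0
    then show ?case by simp
  next
    case (Suc k)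
    have edge: "supporting_edge P (a l) (a (Suc l))" if "l \<le> k" for l
      using assms(2) Suc.prems that by simp
    have inP: "a l \<in> P" if "l \<le> Suc k" for l
      using edge[of l] edge[of "l - 1"] that Suc.prems ij
      unfolding supporting_edge_def by (cases "l \<le> k") (auto simp: not_le Suc_le_eq)
    have ne: "a l \<noteq> a l'" if "l \<le> Suc k" "l' \<le> Suc k" "l \<noteq> l'" for l l'
      using inj_onD[OF assms(1), of l l'] that Suc.prems by auto
    show ?case
    proof (cases "k = j")
      case True
      then have "orient (a j) (a (Suc j)) (a i) > 0"
        using supporting_edge_orient_pos[OF edge inP ne ne] ij by simp
      then show ?thesis
        using True orient_rotate[of "a i" "a j" "a (Suc j)"] by simp
    next
      case False
      then have "j < k" using Suc.prems by simp
      define m where "m = perp (a (Suc i) - a i)"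
      have m: "m \<bullet> (z - a i) = orient (a i) (a (Suc i)) z" for z
        unfolding m_def by (simp add: orient_eq_inner_perp)
      have m_pos: "m \<bullet> (a l - a i) > 0" if "l \<le> Suc k" "l \<noteq> i" "l \<noteq> Suc i" for l
        unfolding m using supporting_edge_orient_pos[OF edge inP ne ne] that ij \<open>j < k\<close>
        by auto
      have "m \<bullet> (a j - a i) \<ge> 0"
        using m_pos[of j] \<open>j < k\<close> ij by (cases "j = Suc i") (auto simp: m)
      moreover have "orient (a k) (a (Suc k)) (a i) > 0"
        using supporting_edge_orient_pos[OF edge inP ne ne] ij \<open>j < k\<close> by simp
      ultimately show ?thesis
        using orient_pos_trans[of m "a k" "a i" "a j" "a (Suc k)"] m_pos[of k] m_pos[of "Suc k"]
          Suc.IH Suc.prems \<open>j < k\<close> ij orient_rotate[of "a i" "a k" "a (Suc k)"]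
        by simp
    qed
  qed
qed

text \<open>For pairwise distinct indices: exactly one of k, l lies between i and j.\<close>
definition interleaved :: "nat \<Rightarrow> nat \<Rightarrow> nat \<Rightarrow> nat \<Rightarrow> bool" where
  "interleaved i j k l \<longleftrightarrow> ((i < k) \<noteq> (j < k)) \<noteq> ((i < l) \<noteq> (j < l))"

lemma convex_chain_segments_disjoint_ordered:
  assumes "convex_chain a N" "i < j" "k < l" "i < k" "j < N" "l < N" "j \<noteq> k" "j \<noteq> l"
    and "\<not> (k < j \<and> j < l)"
  shows "closed_segment (a i) (a j) \<inter> closed_segment (a k) (a l) = {}"
proof (cases "j < k")
  case True
  then show ?thesis
    using assms by (intro closed_segment_disjoint_if_left) (auto simp: convex_chain_def)
next
  case False
  then have "l < j"
    using assms by auto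
  then have "orient (a k) (a l) (a j) > 0" "orient (a i) (a k) (a l) > 0"
    using assms unfolding convex_chain_def by auto
  then have "orient (a k) (a l) (a j) > 0" "orient (a k) (a l) (a i) > 0"
    by (simp_all add: orient_rotate[of "a i" "a k" "a l"])
  then have "closed_segment (a k) (a l) \<inter> closed_segment (a j) (a i) = {}"
    by (rule closed_segment_disjoint_if_left)
  then show ?thesis
    by (auto simp: closed_segment_commute)
qed

lemma convex_chain_segments_disjoint:
  assumes "convex_chain a N" "i < N" "j < N" "k < N" "l < N" "distinct [i, j, k, l]"
    and "\<not> interleaved i j k l"
  shows "closed_segment (a i) (a j) \<inter> closed_segment (a k) (a l) = {}"
proof -
  define i' where "i' = min i j"
  define j' where "j' = max i j"
  define k' where "k' = min k l"
  define l' where "l' = max k l"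
  have segs: "closed_segment (a i) (a j) = closed_segment (a i') (a j')"
    "closed_segment (a k) (a l) = closed_segment (a k') (a l')"
    unfolding i'_def j'_def k'_def l'_def
    by (auto simp: closed_segment_commute min_def max_def)
  have ord: "i' < j'" "k' < l'" "j' < N" "l' < N" "i' \<noteq> k'" "j' \<noteq> k'" "j' \<noteq> l'" "i' \<noteq> l'"
    using assms(2-6) unfolding i'_def j'_def k'_def l'_def by (auto simp: min_def max_def)
  have no_cross: "(i' < k' \<and> k' < j') \<longleftrightarrow> (i' < l' \<and> l' < j')"
    using assms(6,7) unfolding interleaved_def i'_def j'_def k'_def l'_def by (auto simp: min_def max_def)
  show ?thesis
  proof (cases "i' < k'")
    case True
    then show ?thesis
      unfolding segs using ord no_cross
      by (intro convex_chain_segments_disjoint_ordered[OF assms(1)]) auto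
  next
    case False
    then have "closed_segment (a k') (a l') \<inter> closed_segment (a i') (a j') = {}"
      using ord no_cross
      by (intro convex_chain_segments_disjoint_ordered[OF assms(1)]) auto
    then show ?thesis
      unfolding segs by blast
  qed
qed

lemma less_iff_div2_less:
  fixes x y :: nat
  assumes "x div 2 \<noteq> y div 2"
  shows "x < y \<longleftrightarrow> x div 2 < y div 2"
  using assms div_le_mono[of x y 2] div_le_mono[of y x 2] by linarith

text \<open>Split 0, ..., 7 into the blocks {0, 1}, {2, 3}, {4, 5}, {6, 7}: two crossing chords with
  endpoints in four different blocks must join the first block to the third or the second to the
  fourth.\<close>
lemma interleaved_blocks:
  fixes i j k l :: nat
  assumes "i < 8" "j < 8" "k < 8" "l < 8" "distinct [i div 2, j div 2, k div 2, l div 2]"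
    and "interleaved i j k l"
  shows "{i div 2, j div 2} = {0, 2} \<or> {k div 2, l div 2} = {0, 2}"
proof -
  have blocks: "interleaved (i div 2) (j div 2) (k div 2) (l div 2)"
    using assms(5,6) less_iff_div2_less[of i k] less_iff_div2_less[of j k]
      less_iff_div2_less[of i l] less_iff_div2_less[of j l]
    unfolding interleaved_def by auto
  have range: "x div 2 = 0 \<or> x div 2 = 1 \<or> x div 2 = 2 \<or> x div 2 = 3" if "x < 8" for x :: nat
    using that by linarith
  show ?thesis
    using range[OF assms(1)] range[OF assms(2)] range[OF assms(3)] range[OF assms(4)] assms(5) blocks
    unfolding interleaved_def by (elim disjE) (simp_all add: insert_commute)
qed

section \<open>Mutual visibility through common neighbours\<close>

lemma walk_between_length_ge_2:
  assumes "walk_between V E x y ys" "x \<noteq> y"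
  shows "length ys \<ge> 2"
proof (cases ys)
  case (Cons z zs)
  then show ?thesis
    using assms unfolding walk_between_def by (cases zs) auto
qed (use assms in \<open>simp add: walk_between_def is_walk_def\<close>)

lemma walk_between_length_ge_3:
  assumes "walk_between V E x y ys" "x \<noteq> y" "\<not> E x y"
  shows "length ys \<ge> 3"
proof (rule ccontr)
  assume "\<not> length ys \<ge> 3"
  then have "length ys = 2"
    using walk_between_length_ge_2[OF assms(1,2)] by simp
  then obtain u v where ys: "ys = [u, v]"
    by (metis One_nat_def Suc_1 length_0_conv length_Suc_conv)
  have "E (ys ! 0) (ys ! Suc 0)"
    using assms(1) unfolding walk_between_def is_walk_def ys by fastforce
  then show False
    using assms(1,3) ys unfolding walk_between_def by auto
qed

lemma mutually_visible_if_adjacent: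
  assumes "x \<in> V" "y \<in> V" "x \<noteq> y" "E x y"
  shows "mutually_visible V E U x y"
proof -
  have "walk_between V E x y [x, y]"
    using assms unfolding walk_between_def is_walk_def by (auto simp: less_Suc_eq)
  moreover have "length [x, y] \<le> length ys" if "walk_between V E x y ys" for ys
    using walk_between_length_ge_2[OF that assms(3)] by (simp add: numeral_2_eq_2)
  ultimately have "shortest_path V E x y [x, y]"
    unfolding shortest_path_def by blast
  then show ?thesis
    unfolding mutually_visible_def by (intro exI[of _ "[x, y]"]) simp
qed

lemma mutually_visible_if_common_neighbour:
  assumes "x \<in> V" "y \<in> V" "w \<in> V" "x \<noteq> y" "\<not> E x y" "E x w" "E w y" "w \<notin> U"
  shows "mutually_visible V E U x y"
proof -
  have "walk_between V E x y [x, w, y]"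
    using assms unfolding walk_between_def is_walk_def by (auto simp: less_Suc_eq)
  moreover have "length [x, w, y] \<le> length ys" if "walk_between V E x y ys" for ys
    using walk_between_length_ge_3[OF that assms(4,5)] by (simp add: eval_nat_numeral)
  ultimately have "shortest_path V E x y [x, w, y]"
    unfolding shortest_path_def by blast
  then show ?thesis
    unfolding mutually_visible_def using assms(8) by (intro exI[of _ "[x, w, y]"]) simp
qed

lemma mutual_visibility_set_if_common_neighbour_outside:
  assumes "U \<subseteq> V"
    and "\<And>x y. x \<in> U \<Longrightarrow> y \<in> U \<Longrightarrow> x \<noteq> y \<Longrightarrow> \<not> E x y \<Longrightarrow> \<exists>w\<in>V - U. E x w \<and> E w y"
  shows "mutual_visibility_set V E U"
  unfolding mutual_visibility_set_def
proof (intro conjI ballI impI)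
  fix x y assume xy: "x \<in> U" "y \<in> U" "x \<noteq> y"
  show "mutually_visible V E U x y"
  proof (cases "E x y")
    case True
    then show ?thesis
      using xy assms(1) by (intro mutually_visible_if_adjacent) auto
  next
    case False
    then obtain w where "w \<in> V - U" "E x w" "E w y"
      using assms(2) xy by blast
    then show ?thesis
      using xy False assms(1) by (intro mutually_visible_if_common_neighbour) auto
  qed
qed (use assms(1) in blast)

lemma card_le_mu:
  assumes "finite V" "mutual_visibility_set V E U"
  shows "card U \<le> mu V E"
proof -
  have "{card U | U. mutual_visibility_set V E U} \<subseteq> card ` Pow V"
  proof
    fix c assume "c \<in> {card U | U. mutual_visibility_set V E U}"
    then obtain W where "c = card W" "mutual_visibility_set V E W"
      by blast
    then show "c \<in> card ` Pow V"
      unfolding mutual_visibility_set_def by simp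
  qed
  then have "finite {card U | U. mutual_visibility_set V E U}"
    using assms(1) by (rule finite_subset[OF _ finite_imageI[OF finite_Pow_iff[THEN iffD2]]])
  moreover have "card U \<in> {card U | U. mutual_visibility_set V E U}"
    using assms(2) by blast
  ultimately show ?thesis
    unfolding mu_def by (rule Max_ge)
qed

section \<open>The disjointness graph of segments\<close>

lemma seg_vertices_eq_image_2_subsets:
  "seg_vertices P = (\<lambda>S. convex hull S) ` {S. S \<subseteq> P \<and> card S = 2}"
proof (intro equalityI subsetI)
  fix v assume "v \<in> seg_vertices P"
  then obtain p q where "v = closed_segment p q" "p \<in> P" "q \<in> P" "p \<noteq> q"
    unfolding seg_vertices_def by blast
  moreover have "{p, q} \<in> {S. S \<subseteq> P \<and> card S = 2}"
    using calculation by simp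
  ultimately show "v \<in> (\<lambda>S. convex hull S) ` {S. S \<subseteq> P \<and> card S = 2}"
    unfolding segment_convex_hull by (intro image_eqI)
next
  fix v assume "v \<in> (\<lambda>S. convex hull S) ` {S. S \<subseteq> P \<and> card S = 2}"
  then obtain S where "v = convex hull S" "S \<subseteq> P" "card S = 2"
    by blast
  moreover obtain p q where "S = {p, q}" "p \<noteq> q"
    using \<open>card S = 2\<close> by (meson card_2_iff)
  ultimately have "v = closed_segment p q" "p \<in> P" "q \<in> P" "p \<noteq> q"
    by (simp_all add: segment_convex_hull)
  then show "v \<in> seg_vertices P"
    unfolding seg_vertices_def by blast
qed

lemma finite_seg_vertices:
  assumes "finite P"
  shows "finite (seg_vertices P)"
proof -
  have "finite {S. S \<subseteq> P \<and> card S = 2}"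
    by (rule finite_subset[of _ "Pow P"]) (use assms in auto)
  then show ?thesis
    unfolding seg_vertices_eq_image_2_subsets by simp
qed

lemma card_seg_vertices:
  assumes "finite P"
  shows "card (seg_vertices P) = card P choose 2"
proof -
  have "inj_on (\<lambda>S. convex hull S) {S. S \<subseteq> P \<and> card S = 2}"
  proof (rule inj_onI)
    fix S T assume "S \<in> {S. S \<subseteq> P \<and> card S = 2}" "T \<in> {S. S \<subseteq> P \<and> card S = 2}"
      and hulls: "convex hull S = convex hull T"
    then obtain p q r s where "S = {p, q}" "T = {r, s}"
      by (auto simp: card_2_iff)
    moreover have "closed_segment p q = closed_segment r s"
      using hulls calculation by (simp only: segment_convex_hull)
    ultimately show "S = T"
      by simp
  qed
  show ?thesis
    unfolding seg_vertices_eq_image_2_subsets card_image[OF \<open>inj_on _ _\<close>] by (rule n_subsets[OF assms])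
qed

section \<open>Eight segments that witness mutual visibility\<close>

definition witness_segments :: "(nat \<Rightarrow> real^2) \<Rightarrow> (real^2) set set" where
  "witness_segments a = (\<lambda>(i, j). closed_segment (a i) (a j)) `
     set [(0, 1), (2, 3), (4, 5), (6, 7), (0, 4), (0, 5), (1, 4), (1, 5)]"

lemma card_witness_segments: "card (witness_segments a) \<le> 8"
  unfolding witness_segments_def
  by (rule order_trans[OF card_image_le]) (simp_all add: card_length[THEN order_trans])

lemma witness_segments_subset_seg_vertices:
  assumes "inj_on a {..<8}" "\<And>i. i < 8 \<Longrightarrow> a i \<in> P"
  shows "witness_segments a \<subseteq> seg_vertices P"
proof -
  have seg: "closed_segment (a i) (a j) \<in> seg_vertices P" if "i < 8" "j < 8" "i \<noteq> j" for i j
    using assms that inj_onD[OF assms(1), of i j] unfolding seg_vertices_def by auto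
  show ?thesis
    unfolding witness_segments_def by (simp add: seg)
qed

lemma block_edge_mem_witness_segments:
  assumes "t < 4"
  shows "closed_segment (a (2 * t)) (a (Suc (2 * t))) \<in> witness_segments a"
proof -
  have "t = 0 \<or> t = 1 \<or> t = 2 \<or> t = 3"
    using assms by linarith
  then show ?thesis
    unfolding witness_segments_def by (elim disjE) force+
qed

lemma segment_between_blocks_mem_witness_segments:
  assumes "{i div 2, j div 2} = {0, 2 :: nat}"
  shows "closed_segment (a i) (a j) \<in> witness_segments a"
proof -
  have "(i div 2 = 0 \<and> j div 2 = 2) \<or> (i div 2 = 2 \<and> j div 2 = 0)"
    using assms by (simp add: doubleton_eq_iff)
  then have "(i = 0 \<or> i = 1) \<and> (j = 4 \<or> j = 5) \<or> (j = 0 \<or> j = 1) \<and> (i = 4 \<or> i = 5)"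
    by linarith
  then show ?thesis
    unfolding witness_segments_def
    by (elim disjE conjE) (force simp: closed_segment_commute[of "a i"])+
qed

lemma endpoints_one_per_block:
  fixes a :: "nat \<Rightarrow> 'a"
  assumes "inj_on a {..<8}" "\<And>t. t < 4 \<Longrightarrow> \<exists>i<8. i div 2 = t \<and> a i \<in> {p1, p2, p3, p4}"
  obtains i j k l where "i < 8" "j < 8" "k < 8" "l < 8" "a i = p1" "a j = p2" "a k = p3" "a l = p4"
    "distinct [i div 2, j div 2, k div 2, l div 2]"
proof -
  define T where "T = {p1, p2, p3, p4}"
  define I where "I = {i. i < 8 \<and> a i \<in> T}"
  have "finite I" "finite T"
    unfolding I_def T_def by auto
  have "{..<4} \<subseteq> (\<lambda>i. i div 2) ` I"
    using assms(2) unfolding I_def T_def by force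
  then have "4 \<le> card ((\<lambda>i. i div 2) ` I)"
    using card_mono[OF finite_imageI[OF \<open>finite I\<close>]] by fastforce
  moreover have "card ((\<lambda>i. i div 2) ` I) \<le> card I"
    by (rule card_image_le[OF \<open>finite I\<close>])
  moreover have "card I = card (a ` I)"
    using inj_on_subset[OF assms(1), of I] unfolding I_def by (simp add: card_image subset_eq)
  moreover have "card (a ` I) \<le> card T"
    by (rule card_mono[OF \<open>finite T\<close>]) (auto simp: I_def)
  moreover have "card T \<le> 4"
    unfolding T_def using card_length[of "[p1, p2, p3, p4]"] by simp
  ultimately have "card ((\<lambda>i. i div 2) ` I) = card I" "card (a ` I) = card T" "card T = 4"
    by linarith+
  then have blocks: "inj_on (\<lambda>i. i div 2) I"
    using eq_card_imp_inj_on[OF \<open>finite I\<close>] by blast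
  have "a ` I = T"
    by (rule card_subset_eq[OF \<open>finite T\<close> _ \<open>card (a ` I) = card T\<close>]) (auto simp: I_def)
  have "distinct [p1, p2, p3, p4]"
    by (rule card_distinct) (use \<open>card T = 4\<close> in \<open>simp add: T_def\<close>)
  have "p1 \<in> a ` I" "p2 \<in> a ` I" "p3 \<in> a ` I" "p4 \<in> a ` I"
    unfolding \<open>a ` I = T\<close> T_def by simp_all
  then obtain i j k l where ijkl: "i \<in> I" "j \<in> I" "k \<in> I" "l \<in> I"
    and pts: "a i = p1" "a j = p2" "a k = p3" "a l = p4"
    by (elim imageE) blast
  have "distinct [i, j, k, l]"
    using pts \<open>distinct [p1, p2, p3, p4]\<close> by auto
  moreover have "inj_on (\<lambda>i. i div 2) (set [i, j, k, l])"
    by (rule inj_on_subset[OF blocks]) (use ijkl in simp)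
  ultimately have "distinct (map (\<lambda>i. i div 2) [i, j, k, l])"
    unfolding distinct_map by blast
  then show ?thesis
    using that[of i j k l] ijkl pts unfolding I_def by simp
qed

lemma chords_of_different_blocks_witness_or_disjoint:
  assumes "convex_chain a 8" "i < 8" "j < 8" "k < 8" "l < 8"
    and "distinct [i div 2, j div 2, k div 2, l div 2]"
  shows "closed_segment (a i) (a j) \<in> witness_segments a \<or> closed_segment (a k) (a l) \<in> witness_segments a
    \<or> closed_segment (a i) (a j) \<inter> closed_segment (a k) (a l) = {}"
proof (cases "interleaved i j k l")
  case True
  then have "{i div 2, j div 2} = {0, 2} \<or> {k div 2, l div 2} = {0, 2}"
    by (rule interleaved_blocks[OF assms(2-6)])
  then show ?thesis
    using segment_between_blocks_mem_witness_segments[where a = a and i = i and j = j]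
      segment_between_blocks_mem_witness_segments[where a = a and i = k and j = l] by blast
next
  case False
  have "distinct [i, j, k, l]"
    using assms(6) by auto
  then show ?thesis
    using convex_chain_segments_disjoint[OF assms(1-5) _ False] by blast
qed

lemma common_disjoint_witness_segment:
  assumes "convex_chain a 8" "inj_on a {..<8}" "\<And>i. i < 7 \<Longrightarrow> supporting_edge P (a i) (a (Suc i))"
    and "x \<in> seg_vertices P" "y \<in> seg_vertices P" "x \<notin> witness_segments a" "y \<notin> witness_segments a"
    and "x \<inter> y \<noteq> {}"
  shows "\<exists>w\<in>witness_segments a. x \<inter> w = {} \<and> w \<inter> y = {}"
proof (rule ccontr)
  assume none: "\<not> ?thesis"
  obtain p1 p2 p3 p4 where x: "x = closed_segment p1 p2" and y: "y = closed_segment p3 p4"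
    and P: "p1 \<in> P" "p2 \<in> P" "p3 \<in> P" "p4 \<in> P"
    using assms(4,5) unfolding seg_vertices_def by blast
  have "\<exists>i<8. i div 2 = t \<and> a i \<in> {p1, p2, p3, p4}" if "t < 4" for t
  proof (rule ccontr)
    assume "\<not> ?thesis"
    then have outside: "a (2 * t) \<notin> {p1, p2, p3, p4}" "a (Suc (2 * t)) \<notin> {p1, p2, p3, p4}"
      using that by auto
    have edge: "supporting_edge P (a (2 * t)) (a (Suc (2 * t)))"
      using assms(3) that by simp
    have "closed_segment (a (2 * t)) (a (Suc (2 * t))) \<inter> x = {}"
      unfolding x by (rule supporting_edge_disjoint_segment[OF edge]) (use P outside in auto)
    moreover have "closed_segment (a (2 * t)) (a (Suc (2 * t))) \<inter> y = {}"
      unfolding y by (rule supporting_edge_disjoint_segment[OF edge]) (use P outside in auto)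
    ultimately show False
      using none block_edge_mem_witness_segments[OF that, of a] by blast
  qed
  then obtain i j k l where "i < 8" "j < 8" "k < 8" "l < 8"
    and pts: "a i = p1" "a j = p2" "a k = p3" "a l = p4"
    and "distinct [i div 2, j div 2, k div 2, l div 2]"
    by (rule endpoints_one_per_block[OF assms(2)])
  then show False
    using chords_of_different_blocks_witness_or_disjoint[OF assms(1)] assms(6-8)
    unfolding x y pts[symmetric] by blast
qed

lemma mutual_visibility_set_without_witness_segments:
  assumes "convex_chain a 8" "inj_on a {..<8}" "\<And>i. i < 7 \<Longrightarrow> supporting_edge P (a i) (a (Suc i))"
  shows "mutual_visibility_set (seg_vertices P) seg_adj (seg_vertices P - witness_segments a)"
proof (rule mutual_visibility_set_if_common_neighbour_outside)
  have "a i \<in> P" if "i < 8" for i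
    using assms(3)[of i] assms(3)[of 6] that unfolding supporting_edge_def
    by (cases "i < 7") (auto simp: eval_nat_numeral less_Suc_eq)
  then have "witness_segments a \<subseteq> seg_vertices P"
    by (rule witness_segments_subset_seg_vertices[OF assms(2)])
  then show "\<exists>w\<in>seg_vertices P - (seg_vertices P - witness_segments a). seg_adj x w \<and> seg_adj w y"
    if "x \<in> seg_vertices P - witness_segments a" "y \<in> seg_vertices P - witness_segments a"
      "\<not> seg_adj x y" for x y
    using common_disjoint_witness_segment[OF assms, of x y] that unfolding seg_adj_def by auto
qed blast

theorem lemma17:
  fixes P :: "(real^2) set"
  assumes "finite P"
    and "general_position P"
    and "card (P \<inter> frontier (convex hull P)) \<in> {8, 9}"
  shows "mu (seg_vertices P) seg_adj \<ge> (card P choose 2) - 8"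
proof -
  define m where "m = card (P \<inter> frontier (convex hull P))"
  have "8 \<le> m"
    using assms(3) unfolding m_def by auto
  then obtain a where edges: "\<And>i. supporting_edge P (a i) (a (Suc i))" and "inj_on a {..<m}"
    unfolding m_def by (rule supporting_chain_exists[OF assms(1,2) order_trans[rotated]]) auto
  then have inj: "inj_on a {..<8}"
    using \<open>8 \<le> m\<close> by (blast intro: inj_on_subset)
  then have "convex_chain a 8"
    using edges by (rule supporting_chain_convex)
  then have "mutual_visibility_set (seg_vertices P) seg_adj (seg_vertices P - witness_segments a)"
    using inj edges by (rule mutual_visibility_set_without_witness_segments)
  then have "card (seg_vertices P - witness_segments a) \<le> mu (seg_vertices P) seg_adj"
    by (rule card_le_mu[OF finite_seg_vertices[OF assms(1)]])
  moreover have "card (seg_vertices P) - card (witness_segments a)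
      \<le> card (seg_vertices P - witness_segments a)"
    by (rule diff_card_le_card_Diff) (simp add: witness_segments_def)
  ultimately show ?thesis
    using card_witness_segments[of a] card_seg_vertices[OF assms(1)] by linarith
qed

end
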